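(* Let $\mathcal H=\{h_i:i\in\mathbb N\}$ be the class of singletons over $\mathbb N$, where $h_i(x)=1$ if $x=i$ and $h_i(x)=-1$ otherwise. There are two maps $F_a,F_b:\{0,1\}^n\to([n]\times\{\pm1\})^n$ such that for all $x,y\in\{0,1\}^n$, with $S=(F_a(x),F_b(y))$ (the concatenation, a sample of size $2n$) and identifying $x,y$ with subsets of $[n]$: (1) if $x\cap y=\emptyset$ then $L_S(f)\ge\frac{|x|+|y|}{2n}$ for every $f:[n]\to\{\pm1\}$; (2) if $x\cap y\ne\emptyset$ then $L_S(h)\le\frac{|x|+|y|-2}{2n}$ for some $h\in\mathcal H$.
   Context: For a sample $S$ (finite sequence of pairs $(x,y)$ with $y\in\{\pm1\}$) and hypothesis $h$, $L_S(h)=\frac{1}{|S|}\sum_{(x,y)\in S}1[h(x)\ne y]$. *)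

theory Defs
  imports Complex_Main
begin

definition emp_loss :: "(nat \<times> int) list \<Rightarrow> (nat \<Rightarrow> int) \<Rightarrow> real" where
  "emp_loss S h = (\<Sum>(x,y)\<leftarrow>S. if h x \<noteq> y then 1 else 0) / real (length S)"

definition singleton_hyp :: "nat \<Rightarrow> nat \<Rightarrow> int" where
  "singleton_hyp i x = (if x = i then 1 else -1)"

end

theory Submission
  imports Defs
begin

text \<open>Encode a set \<open>A \<subseteq> [n]\<close> as the sample labelling each point \<open>i \<in> [n]\<close> by \<open>+1\<close> iff \<open>i \<in> A\<close>,
  and let both maps be this encoding. Since \<open>x\<close> and \<open>y\<close> label every point twice,
  a point \<open>j\<close> costs any hypothesis at least one mistake whenever it lies in exactly one of \<open>x, y\<close>;
  this gives \<open>|x| + |y|\<close> mistakes when \<open>x \<inter> y = {}\<close>. If \<open>i \<in> x \<inter> y\<close>, the singleton \<open>h\<^sub>i\<close> errs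
  exactly on \<open>(x - {i}) \<union> (y - {i})\<close> counted with multiplicity, i.e. \<open>|x| + |y| - 2\<close> times.\<close>

definition sign_label :: "nat set \<Rightarrow> nat \<Rightarrow> int" where
  "sign_label A i = (if i \<in> A then 1 else -1)"

definition labelled_sample :: "nat \<Rightarrow> nat set \<Rightarrow> (nat \<times> int) list" where
  "labelled_sample n A = map (\<lambda>i. (i, sign_label A i)) [1..<Suc n]"

lemma length_labelled_sample [simp]: "length (labelled_sample n A) = n"
  by (simp add: labelled_sample_def)

lemma set_labelled_sample: "set (labelled_sample n A) \<subseteq> {1..n} \<times> {-1, 1}"
  by (auto simp: labelled_sample_def sign_label_def split: if_splits)

lemma mistakes_labelled_sample:
  "(\<Sum>(p, q)\<leftarrow>labelled_sample n A. if f p \<noteq> q then 1 else 0)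
     = (\<Sum>i\<in>{1..n}. of_bool (f i \<noteq> sign_label A i) :: real)"
  unfolding labelled_sample_def
  by (simp only: map_map o_def case_prod_conv of_bool_def[symmetric]
      sum_list_distinct_conv_sum_set[OF distinct_upt] set_upt atLeastLessThanSuc_atLeastAtMost)

lemma emp_loss_labelled_samples:
  "emp_loss (labelled_sample n x @ labelled_sample n y) f
     = (\<Sum>i\<in>{1..n}. of_bool (f i \<noteq> sign_label x i) + of_bool (f i \<noteq> sign_label y i))
       / real (2 * n)"
  unfolding emp_loss_def map_append sum_list_append mistakes_labelled_sample sum.distrib
    length_append length_labelled_sample mult_2 ..

lemma card_eq_sum_of_bool:
  "(A :: nat set) \<subseteq> {1..n} \<Longrightarrow> real (card A) = (\<Sum>j\<in>{1..n}. of_bool (j \<in> A))"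
  by (simp add: Int_absorb1)

lemma mistakes_on_disjoint_labels:
  assumes "f j \<in> {-1, 1}" and "x \<inter> y = {}"
  shows "of_bool (j \<in> x) + of_bool (j \<in> y)
           \<le> (of_bool (f j \<noteq> sign_label x j) + of_bool (f j \<noteq> sign_label y j) :: real)"
  using assms by (auto simp: sign_label_def)

lemma singleton_hyp_mistake:
  assumes "i \<in> A"
  shows "(of_bool (singleton_hyp i j \<noteq> sign_label A j) :: real) = of_bool (j \<in> A) - of_bool (j = i)"
  using assms by (auto simp: singleton_hyp_def sign_label_def)

lemma emp_loss_lower_bound_disjoint:
  assumes "x \<subseteq> {1..n}" "y \<subseteq> {1..n}" "x \<inter> y = {}" and "f ` {1..n} \<subseteq> {-1, 1}"
  shows "emp_loss (labelled_sample n x @ labelled_sample n y) f \<ge> real (card x + card y) / real (2 * n)"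
proof -
  have "real (card x + card y) = (\<Sum>j\<in>{1..n}. of_bool (j \<in> x) + of_bool (j \<in> y))"
    by (simp only: of_nat_add sum.distrib card_eq_sum_of_bool[OF assms(1)]
        card_eq_sum_of_bool[OF assms(2)])
  also have "\<dots> \<le> (\<Sum>j\<in>{1..n}. of_bool (f j \<noteq> sign_label x j) + of_bool (f j \<noteq> sign_label y j))"
    using assms(3,4) by (intro sum_mono mistakes_on_disjoint_labels) (auto simp: image_subset_iff)
  finally show ?thesis
    unfolding emp_loss_labelled_samples by (rule divide_right_mono) simp
qed

lemma emp_loss_singleton_hyp_common_point:
  assumes "x \<subseteq> {1..n}" "y \<subseteq> {1..n}" "i \<in> x" "i \<in> y"
  shows "emp_loss (labelled_sample n x @ labelled_sample n y) (singleton_hyp i)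
           = (real (card x + card y) - 2) / real (2 * n)"
proof -
  have i_range: "(\<Sum>j\<in>{1..n}. of_bool (j = i) :: real) = 1"
    using assms(1,3) by auto
  have mistakes: "(\<Sum>j\<in>{1..n}. of_bool (singleton_hyp i j \<noteq> sign_label A j) :: real)
      = real (card A) - 1" if "A \<subseteq> {1..n}" "i \<in> A" for A
    by (simp only: singleton_hyp_mistake[OF that(2)] sum_subtractf i_range
        card_eq_sum_of_bool[OF that(1), symmetric])
  show ?thesis
    unfolding emp_loss_labelled_samples sum.distrib mistakes[OF assms(1,3)] mistakes[OF assms(2,4)]
    by simp
qed

theorem lemma3:
  fixes n :: nat
  shows "\<exists>Fa Fb :: nat set \<Rightarrow> (nat \<times> int) list.
    (\<forall>x. x \<subseteq> {1..n} \<longrightarrow>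
        length (Fa x) = n \<and> set (Fa x) \<subseteq> {1..n} \<times> {-1, 1} \<and>
        length (Fb x) = n \<and> set (Fb x) \<subseteq> {1..n} \<times> {-1, 1}) \<and>
    (\<forall>x y. x \<subseteq> {1..n} \<longrightarrow> y \<subseteq> {1..n} \<longrightarrow>
       (x \<inter> y = {} \<longrightarrow>
          (\<forall>f :: nat \<Rightarrow> int. f ` {1..n} \<subseteq> {-1, 1} \<longrightarrow>
             emp_loss (Fa x @ Fb y) f \<ge> real (card x + card y) / real (2 * n))) \<and>
       (x \<inter> y \<noteq> {} \<longrightarrow>
          (\<exists>i. emp_loss (Fa x @ Fb y) (singleton_hyp i)
                 \<le> (real (card x + card y) - 2) / real (2 * n))))"
proof (intro exI[of _ "labelled_sample n"] conjI allI impI)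
  fix x y assume x: "x \<subseteq> {1..n}" and y: "y \<subseteq> {1..n}"
  {
    fix f :: "nat \<Rightarrow> int" assume "x \<inter> y = {}" "f ` {1..n} \<subseteq> {-1, 1}"
    with x y show "emp_loss (labelled_sample n x @ labelled_sample n y) f
                     \<ge> real (card x + card y) / real (2 * n)"
      by (rule emp_loss_lower_bound_disjoint)
  next
    assume "x \<inter> y \<noteq> {}"
    then obtain i where "i \<in> x" "i \<in> y"
      by blast
    with x y have "emp_loss (labelled_sample n x @ labelled_sample n y) (singleton_hyp i)
                     = (real (card x + card y) - 2) / real (2 * n)"
      by (rule emp_loss_singleton_hyp_common_point)
    then show "\<exists>i. emp_loss (labelled_sample n x @ labelled_sample n y) (singleton_hyp i)
                 \<le> (real (card x + card y) - 2) / real (2 * n)"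
      by (metis order.refl)
  }
qed (simp_all only: length_labelled_sample set_labelled_sample)

end
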